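(* Fix $\alpha\in[\tfrac12,1)$. After any sequence of insert, delete and get operations (with counter-based rebuilding), a SAIT storing $n$ keys with total number of accesses $m$ uses $O(m^{\alpha}\cdot n)$ memory.
   Context: A Generic Self-Adjusting Tree (GSAT) with degree function $D$ for a set of integer keys with access counts $ac_i\ge1$ consists of $m=\sum_i ac_i$, an array of $k\le\lceil D(m)\rceil$ representative keys with their access counts, and $k+1$ child subtrees that are GSATs for the keys lying strictly before the first representative, strictly between consecutive representatives, and strictly after the last; every node stores at least one key. A GSAT is ideal if each child $T_j$ of the root satisfies $m(T_j)\le m/(D(m)+1)$, where $m(T_j)$ is the total access count of keys in $T_j$, and each child is ideal. A SAIT is a GSAT with $D(m)=\sqrt m$ in which each node whose subtree has total access count $m'$ at the time of its construction stores an interpolation array $ID$ of size $\lceil m'^{\alpha}\rceil$ and otherwise $O(D(m'))$ data. Dynamic operations: each node $v$ has a counter $C(v)$ and $im(T_v)$, the value of $m(T_v)$ at the last (re)build of $T_v$; an operation on key $x$ walks the search path, increments counters of visited nodes and the access count of $x$ (insert of an absent key adds a new constant-size node holding $x$ with count 1, delete only marks the key); then the shallowest visited $u$ with $C(u)>im(T_u)/4$ (if any) has $T_u$ rebuilt into an ideal SAIT of its unmarked keys, resetting counters to $0$ and $im$ values. *)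

theory Defs
  imports Complex_Main "HOL-Library.Multiset"
begin

text \<open>A node is  Node im c rs ks  where
  im = m(T_v) at the last (re)build of the subtree rooted at v (this is also the
       value m' that determines the size of the interpolation array ID of v),
  c  = the counter C(v),
  rs = the array of representatives (key, access count, deletion mark), and
  ks = the k+1 child subtrees.\<close>

datatype sait = Leaf | Node nat nat "(int \<times> nat \<times> bool) list" "sait list"

datatype sop = Ins int | Del int | Get int

fun opkey :: "sop \<Rightarrow> int" where
  "opkey (Ins x) = x" | "opkey (Del x) = x" | "opkey (Get x) = x"

fun entries :: "sait \<Rightarrow> (int \<times> nat \<times> bool) list" where
  "entries Leaf = []"
| "entries (Node im c rs ks) = rs @ concat (map entries ks)"

definition msum :: "sait \<Rightarrow> nat" where
  "msum t = sum_list (map (\<lambda>(x, a, d). a) (entries t))"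

definition keys :: "sait \<Rightarrow> int set" where
  "keys t = fst ` set (entries t)"

definition nkeys :: "sait \<Rightarrow> nat" where
  "nkeys t = length (entries t)"

text \<open>GSAT with degree function D(m) = sqrt m (search-tree structure).\<close>
fun gsat :: "sait \<Rightarrow> bool" where
  "gsat Leaf = True"
| "gsat (Node im c rs ks) =
     (rs \<noteq> [] \<and>
      real (length rs) \<le> of_int \<lceil>sqrt (real (msum (Node im c rs ks)))\<rceil> \<and>
      length ks = length rs + 1 \<and>
      sorted_wrt (<) (map fst rs) \<and>
      (\<forall>(x, a, d) \<in> set rs. 1 \<le> a) \<and>
      (\<forall>j < length ks. \<forall>y \<in> keys (ks ! j).
          (0 < j \<longrightarrow> fst (rs ! (j - 1)) < y) \<and> (j < length rs \<longrightarrow> y < fst (rs ! j))) \<and>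
      (\<forall>k \<in> set ks. gsat k))"

fun ideal :: "sait \<Rightarrow> bool" where
  "ideal Leaf = True"
| "ideal (Node im c rs ks) =
     (\<forall>k \<in> set ks. real (msum k) \<le> real (msum (Node im c rs ks)) / (sqrt (real (msum (Node im c rs ks))) + 1)
        \<and> ideal k)"

fun fresh :: "sait \<Rightarrow> bool" where
  "fresh Leaf = True"
| "fresh (Node im c rs ks) =
     (im = msum (Node im c rs ks) \<and> c = 0 \<and> (\<forall>(x, a, d) \<in> set rs. \<not> d) \<and> (\<forall>k \<in> set ks. fresh k))"

definition rebuild_of :: "sait \<Rightarrow> sait \<Rightarrow> bool" where
  "rebuild_of t t' \<longleftrightarrow> gsat t' \<and> ideal t' \<and> fresh t' \<and>
     mset (map (\<lambda>(x, a, d). (x, a)) (entries t')) =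
     mset (map (\<lambda>(x, a, d). (x, a)) (filter (\<lambda>(x, a, d). \<not> d) (entries t)))"

fun upd_entry :: "sop \<Rightarrow> int \<times> nat \<times> bool \<Rightarrow> int \<times> nat \<times> bool" where
  "upd_entry (Ins y) (x, a, d) = (x, a + 1, False)"
| "upd_entry (Del y) (x, a, d) = (x, a + 1, True)"
| "upd_entry (Get y) (x, a, d) = (x, a + 1, d)"

definition child_idx :: "int \<Rightarrow> (int \<times> nat \<times> bool) list \<Rightarrow> nat" where
  "child_idx x rs = length (filter (\<lambda>y. y < x) (map fst rs))"

function access :: "sop \<Rightarrow> sait \<Rightarrow> sait" where
  "access (Ins x) Leaf = Node 1 0 [(x, 1, False)] [Leaf, Leaf]"
| "access (Del x) Leaf = Leaf"
| "access (Get x) Leaf = Leaf"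
| "access p (Node im c rs ks) =
     (if opkey p \<in> fst ` set rs
      then Node im (c + 1) (map (\<lambda>e. if fst e = opkey p then upd_entry p e else e) rs) ks
      else (let j = child_idx (opkey p) rs in
            if j < length ks then Node im (c + 1) rs (ks[j := access p (ks ! j)])
            else Node im (c + 1) rs ks))"
  by pat_completeness auto
termination
  by (relation "measure (\<lambda>(p, t). size t)")
     (auto simp: less_Suc_eq_le intro!: size_list_estimation' nth_mem)

text \<open>After the walk: the shallowest visited node u with C(u) > im(T_u)/4 (if any)
  has its subtree rebuilt into an ideal SAIT of its unmarked keys.\<close>
inductive settle :: "int \<Rightarrow> sait \<Rightarrow> sait \<Rightarrow> bool" where
  leaf: "settle x Leaf Leaf"
| rebuild: "4 * c > im \<Longrightarrow> rebuild_of (Node im c rs ks) t' \<Longrightarrow> settle x (Node im c rs ks) t'"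
| found: "\<not> 4 * c > im \<Longrightarrow> x \<in> fst ` set rs \<Longrightarrow> settle x (Node im c rs ks) (Node im c rs ks)"
| down: "\<not> 4 * c > im \<Longrightarrow> x \<notin> fst ` set rs \<Longrightarrow> child_idx x rs < length ks \<Longrightarrow>
         settle x (ks ! child_idx x rs) t' \<Longrightarrow>
         settle x (Node im c rs ks) (Node im c rs (ks[child_idx x rs := t']))"

text \<open>Reachable states, together with the total number of accesses m so far
  (= initial total access count plus all increments of access counts by operations).\<close>
inductive reach :: "sait \<Rightarrow> nat \<Rightarrow> bool" where
  init: "gsat t \<Longrightarrow> ideal t \<Longrightarrow> fresh t \<Longrightarrow> reach t (msum t)"
| step: "reach t M \<Longrightarrow> settle (opkey p) (access p t) t' \<Longrightarrow>
         reach t' (M + (msum (access p t) - msum t))"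

text \<open>Memory: each node stores ID of size ceil(im^alpha) plus its representative array
  (key, count, mark), child pointers and two counters (O(D(im)) data).\<close>
fun mem :: "real \<Rightarrow> sait \<Rightarrow> nat" where
  "mem \<alpha> Leaf = 0"
| "mem \<alpha> (Node im c rs ks) =
     nat \<lceil>real im powr \<alpha>\<rceil> + 3 * length rs + length ks + 2 + sum_list (map (mem \<alpha>) ks)"

end

theory Submission
  imports Defs
begin

text \<open>Every node of a reachable tree stores at least one representative and one more child than
  representatives, and its build size im lies between 1 and the total number of accesses M so far:
  operations never decrease access counts, so a subtree can never be rebuilt from more than M
  accesses. Hence each node uses at most O(M^\<alpha>) memory besides O(1) per representative, and
  since representatives are exactly the stored keys, the memory is O(M^\<alpha> n).\<close>

fun shape_bounded :: "nat \<Rightarrow> sait \<Rightarrow> bool" where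
  "shape_bounded N Leaf = True"
| "shape_bounded N (Node im c rs ks) \<longleftrightarrow>
     rs \<noteq> [] \<and> length ks = length rs + 1 \<and> 1 \<le> im \<and> im \<le> N \<and> (\<forall>k\<in>set ks. shape_bounded N k)"

lemma shape_bounded_mono: "shape_bounded N t \<Longrightarrow> N \<le> N' \<Longrightarrow> shape_bounded N' t"
  by (induction t) auto

lemma shape_bounded_update:
  assumes "shape_bounded N (Node im c rs ks)" and "shape_bounded N t"
  shows "shape_bounded N (Node im c' rs (ks[j := t]))"
  using assms set_update_subset_insert[of ks j t] by auto

lemma msum_Leaf [simp]: "msum Leaf = 0"
  by (simp add: msum_def)

lemma msum_Node:
  "msum (Node im c rs ks) = sum_list (map (\<lambda>(x, a, d). a) rs) + sum_list (map msum ks)"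
  by (induction ks) (simp_all add: msum_def)

lemma nkeys_Node: "nkeys (Node im c rs ks) = length rs + sum_list (map nkeys ks)"
  by (simp add: nkeys_def[abs_def] length_concat comp_def)

lemma msum_child_le: "k \<in> set ks \<Longrightarrow> msum k \<le> msum (Node im c rs ks)"
  by (simp add: msum_Node member_le_sum_list trans_le_add2)

lemma msum_Node_update:
  assumes "j < length ks"
  shows "msum (Node im c' rs (ks[j := t])) + msum (ks ! j) = msum (Node im c rs ks) + msum t"
proof -
  have "msum (ks ! j) \<le> sum_list (map msum ks)"
    using elem_le_sum_list[of j "map msum ks"] assms by simp
  then show ?thesis
    using sum_list_update[of j "map msum ks" "msum t"] assms by (simp add: msum_Node map_update)
qed

lemma msum_pos_if_gsat: "gsat (Node im c rs ks) \<Longrightarrow> 1 \<le> msum (Node im c rs ks)"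
proof -
  assume g: "gsat (Node im c rs ks)"
  then obtain x a d where e: "(x, a, d) \<in> set rs" by (cases rs) auto
  then have "a \<le> sum_list (map (\<lambda>(x, a, d). a) rs)"
    using member_le_sum_list[of a "map (\<lambda>(x, a, d). a) rs"] by force
  moreover have "1 \<le> a" using g e by auto
  ultimately show ?thesis by (simp add: msum_Node)
qed

lemma sum_counts_eq_sum_mset:
  "sum_list (map (\<lambda>(x, a, d). a) es) = sum_mset (image_mset snd (mset (map (\<lambda>(x, a, d). (x, a)) es)))"
  by (induction es) auto

lemma rebuild_of_msum_le: "rebuild_of t t' \<Longrightarrow> msum t' \<le> msum t"
proof -
  assume "rebuild_of t t'"
  then have "msum t' = sum_list (map (\<lambda>(x, a, d). a) (filter (\<lambda>(x, a, d). \<not> d) (entries t)))"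
    unfolding rebuild_of_def msum_def sum_counts_eq_sum_mset by simp
  also have "\<dots> \<le> msum t"
    unfolding msum_def by (rule sum_list_filter_le_nat)
  finally show ?thesis .
qed

lemma fresh_shape_bounded: "gsat t \<Longrightarrow> fresh t \<Longrightarrow> msum t \<le> N \<Longrightarrow> shape_bounded N t"
proof (induction t)
  case (Node im c rs ks)
  have "\<forall>k\<in>set ks. shape_bounded N k"
    using Node msum_child_le[of _ ks im c rs] by fastforce
  then show ?case using Node.prems msum_pos_if_gsat[of im c rs ks] by auto
qed simp

lemma upd_entry_count_mono: "(\<lambda>(x, a, d). a) e \<le> (\<lambda>(x, a, d). a) (upd_entry p e)"
  by (cases p; cases e) auto

lemma msum_access_ge: "msum t \<le> msum (access p t)"
proof (induction p t rule: access.induct)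
  case (4 p im c rs ks)
  define j where "j = child_idx (opkey p) rs"
  consider (found) "opkey p \<in> fst ` set rs"
    | (down) "opkey p \<notin> fst ` set rs" "j < length ks"
    | (miss) "opkey p \<notin> fst ` set rs" "\<not> j < length ks"
    by blast
  then show ?case
  proof cases
    case found
    have "sum_list (map (\<lambda>(x, a, d). a) rs)
        \<le> sum_list (map ((\<lambda>(x, a, d). a) \<circ> (\<lambda>e. if fst e = opkey p then upd_entry p e else e)) rs)"
      by (rule sum_list_mono) (auto simp: upd_entry_count_mono)
    with found show ?thesis by (simp add: msum_Node)
  next
    case down
    then have "msum (ks ! j) \<le> msum (access p (ks ! j))" using 4 j_def by simp
    with down show ?thesis
      using msum_Node_update[of j ks im "c + 1" rs "access p (ks ! j)" c]
      by (simp add: j_def Let_def)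
  next
    case miss
    then show ?thesis by (simp add: msum_Node j_def Let_def)
  qed
qed (simp_all add: msum_Node)

lemma shape_bounded_access:
  "shape_bounded N t \<Longrightarrow> msum (access p t) \<le> N \<Longrightarrow> shape_bounded N (access p t)"
proof (induction p t rule: access.induct)
  case (4 p im c rs ks)
  define j where "j = child_idx (opkey p) rs"
  show ?case
  proof (cases "opkey p \<notin> fst ` set rs \<and> j < length ks")
    case True
    let ?t' = "Node im (c + 1) rs (ks[j := access p (ks ! j)])"
    have access_eq: "access p (Node im c rs ks) = ?t'"
      using True by (simp add: j_def Let_def)
    have "access p (ks ! j) \<in> set (ks[j := access p (ks ! j)])"
      using True by (simp add: set_update_memI)
    then have "msum (access p (ks ! j)) \<le> N"
      using msum_child_le 4(3) access_eq by (metis le_trans)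
    then have "shape_bounded N (access p (ks ! j))"
      using 4 True j_def by auto
    with 4(2) show ?thesis
      using access_eq shape_bounded_update by metis
  next
    case False
    then show ?thesis using 4(2) by (auto simp: j_def[symmetric] Let_def)
  qed
qed (simp_all add: msum_Node)

lemma settle_shape_bounded:
  "settle x t t' \<Longrightarrow> shape_bounded N t \<Longrightarrow> msum t \<le> N \<Longrightarrow>
     shape_bounded N t' \<and> msum t' \<le> msum t"
proof (induction rule: settle.induct)
  case (rebuild c im rs ks t')
  have le: "msum t' \<le> msum (Node im c rs ks)" using rebuild(2) by (rule rebuild_of_msum_le)
  from rebuild(2) have "gsat t'" and "fresh t'"
    unfolding rebuild_of_def by blast+
  moreover have "msum t' \<le> N" using le rebuild.prems(2) by (rule le_trans)
  ultimately have "shape_bounded N t'" by (rule fresh_shape_bounded)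
  with le show ?case by blast
next
  case (down c im x rs ks t')
  define j where "j = child_idx x rs"
  have j: "j < length ks" using down(3) j_def by simp
  have "shape_bounded N (ks ! j)" using down.prems(1) j by simp
  moreover have "msum (ks ! j) \<le> N"
    using msum_child_le[of "ks ! j" ks im c rs] j down.prems(2) by simp
  ultimately have "shape_bounded N t' \<and> msum t' \<le> msum (ks ! j)"
    using down.IH j_def by blast
  moreover have "msum (Node im c rs (ks[j := t'])) + msum (ks ! j) = msum (Node im c rs ks) + msum t'"
    using j by (rule msum_Node_update)
  ultimately show ?case
    using down.prems(1) shape_bounded_update[of N im c rs ks t' c j]
    by (simp add: j_def[symmetric])
qed simp_all

lemma reach_shape_bounded: "reach t M \<Longrightarrow> shape_bounded M t \<and> msum t \<le> M"
proof (induction rule: reach.induct)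
  case (init t)
  then show ?case using fresh_shape_bounded by auto
next
  case (step t M p t')
  let ?M' = "M + (msum (access p t) - msum t)"
  have "msum t \<le> msum (access p t)" by (rule msum_access_ge)
  then have "msum (access p t) \<le> ?M'" and "shape_bounded ?M' (access p t)"
    using step shape_bounded_mono shape_bounded_access by auto
  then show ?case using settle_shape_bounded[OF step(2)] by fastforce
qed

lemma node_mem_le:
  assumes "0 \<le> \<alpha>" and "1 \<le> im" and "im \<le> N" and "1 \<le> r"
  shows "real (nat \<lceil>real im powr \<alpha>\<rceil> + 3 * r + (r + 1) + 2) \<le> 9 * real N powr \<alpha> * real r"
proof -
  let ?P = "real N powr \<alpha>"
  have P: "1 \<le> ?P" using assms by (simp add: ge_one_powr_ge_zero)
  have "0 \<le> \<lceil>real im powr \<alpha>\<rceil>" by (simp add: order.strict_trans2[of _ 0])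
  then have "real (nat \<lceil>real im powr \<alpha>\<rceil>) \<le> real im powr \<alpha> + 1"
    using of_int_ceiling_le_add_one[of "real im powr \<alpha>"] by (simp add: of_nat_nat)
  also have "\<dots> \<le> ?P + 1" using assms by (simp add: powr_mono2)
  finally have ceil: "real (nat \<lceil>real im powr \<alpha>\<rceil>) \<le> ?P + 1" .
  have "?P \<le> ?P * r" and "real r \<le> ?P * r" and "1 \<le> ?P * r"
    using P assms(4) mult_left_mono[of 1 "real r" ?P] mult_right_mono[of 1 ?P "real r"] by simp_all
  with ceil show ?thesis by simp
qed

lemma mem_le_if_shape_bounded:
  assumes "0 \<le> \<alpha>"
  shows "shape_bounded N t \<Longrightarrow> real (mem \<alpha> t) \<le> 9 * real N powr \<alpha> * real (nkeys t)"
proof (induction t)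
  case Leaf
  then show ?case by (simp add: nkeys_def)
next
  case (Node im c rs ks)
  let ?C = "9 * real N powr \<alpha>"
  have "real (sum_list (map (mem \<alpha>) ks)) = (\<Sum>k\<leftarrow>ks. real (mem \<alpha> k))"
    by (simp add: sum_list_of_nat[symmetric] comp_def)
  also have "\<dots> \<le> (\<Sum>k\<leftarrow>ks. ?C * real (nkeys k))"
    using Node by (intro sum_list_mono) auto
  also have "\<dots> = ?C * real (sum_list (map nkeys ks))"
    by (simp add: sum_list_const_mult sum_list_of_nat[symmetric] comp_def)
  finally have "real (sum_list (map (mem \<alpha>) ks)) \<le> ?C * real (sum_list (map nkeys ks))" .
  moreover have "1 \<le> length rs" using Node.prems by (cases rs) auto
  ultimately show ?case
    using Node.prems node_mem_le[OF assms, of im N "length rs"]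
    by (simp add: nkeys_Node algebra_simps)
qed

theorem theorem6:
  fixes \<alpha> :: real
  assumes "1/2 \<le> \<alpha>" and "\<alpha> < 1"
  shows "\<exists>C > 0. \<forall>t M. reach t M \<longrightarrow>
           real (mem \<alpha> t) \<le> C * real M powr \<alpha> * real (nkeys t)"
proof (intro exI[of _ 9] conjI allI impI)
  fix t M
  assume "reach t M"
  then have "shape_bounded M t" using reach_shape_bounded by blast
  moreover have "0 \<le> \<alpha>" using assms(1) by simp
  ultimately show "real (mem \<alpha> t) \<le> 9 * real M powr \<alpha> * real (nkeys t)"
    using mem_le_if_shape_bounded by blast
qed simp

end
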